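(* For every $n\ge 3$, the power graph $P(G(n))$ of the gyrogroup $G(n)$ (defined in the context) is not Hamiltonian.
   Context: Let $n\ge 3$ be an integer and $m=2^{n-1}$. Let $P(n)=\{0,1,\dots,m-1\}$, $H(n)=\{m,m+1,\dots,2^n-1\}$ and $G(n)=P(n)\cup H(n)$. For $i,j\in G(n)$ let $t,s,k\in P(n)$ be the residues modulo $m$ (taken in $\{0,\dots,m-1\}$) of $i+j$, $i+(\frac m2-1)j$ and $(\frac m2+1)i+(\frac m2-1)j$, respectively, and define $i\oplus j=t$ if $i,j\in P(n)$; $i\oplus j=t+m$ if $i\in P(n),j\in H(n)$; $i\oplus j=s+m$ if $i\in H(n),j\in P(n)$; $i\oplus j=k$ if $i,j\in H(n)$. Then $(G(n),\oplus)$ is a gyrogroup with identity $e=0$. Powers are defined by $a^1=a$, $a^{k+1}=a^k\oplus a$. The power graph $P(G(n))$ is the simple undirected graph with vertex set $G(n)$ in which distinct vertices $u,v$ are adjacent if and only if $u^k=v$ or $v^k=u$ for some positive integer $k$. A graph is Hamiltonian if it has a cycle passing through every vertex. *)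

theory Defs
  imports Main
begin

definition gm :: "nat \<Rightarrow> nat" where "gm n = 2 ^ (n - 1)"

definition PP :: "nat \<Rightarrow> nat set" where "PP n = {0..<gm n}"
definition HH :: "nat \<Rightarrow> nat set" where "HH n = {gm n..<2 ^ n}"
definition GG :: "nat \<Rightarrow> nat set" where "GG n = PP n \<union> HH n"

definition gop :: "nat \<Rightarrow> nat \<Rightarrow> nat \<Rightarrow> nat" where
  "gop n i j =
    (let m = gm n;
         t = (i + j) mod m;
         s = (i + (m div 2 - 1) * j) mod m;
         k = ((m div 2 + 1) * i + (m div 2 - 1) * j) mod m
     in if i \<in> PP n \<and> j \<in> PP n then t
        else if i \<in> PP n \<and> j \<in> HH n then t + m
        else if i \<in> HH n \<and> j \<in> PP n then s + m
        else k)"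

fun gpow :: "nat \<Rightarrow> nat \<Rightarrow> nat \<Rightarrow> nat" where
  "gpow n a 0 = 0"
| "gpow n a (Suc 0) = a"
| "gpow n a (Suc (Suc k)) = gop n (gpow n a (Suc k)) a"

definition pg_adj :: "nat \<Rightarrow> nat \<Rightarrow> nat \<Rightarrow> bool" where
  "pg_adj n u v \<longleftrightarrow> u \<in> GG n \<and> v \<in> GG n \<and> u \<noteq> v \<and>
     (\<exists>k>0. gpow n u k = v \<or> gpow n v k = u)"

definition hamiltonian :: "'a set \<Rightarrow> ('a \<Rightarrow> 'a \<Rightarrow> bool) \<Rightarrow> bool" where
  "hamiltonian V E \<longleftrightarrow> (\<exists>vs. distinct vs \<and> set vs = V \<and> length vs \<ge> 3 \<and>
     (\<forall>i. Suc i < length vs \<longrightarrow> E (vs ! i) (vs ! Suc i)) \<and>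
     E (last vs) (hd vs))"

end

theory Submission
  imports Defs
begin

(* Every element h of H(n) is an involution: h \<oplus> h = 0 and 0 \<oplus> h = h, so the only
   powers of h are 0 and h. Since P(n) is closed under \<oplus>, no power of an element
   of P(n) lies in H(n). Hence each vertex of H(n) is adjacent to 0 only, whereas
   every vertex on a Hamiltonian cycle has two distinct neighbours. *)

lemma hamiltonian_obtains_neighbours:
  assumes "hamiltonian V E" and "v \<in> V"
  obtains u w where "u \<noteq> w" and "E u v" and "E v w"
proof -
  obtain vs where distinct: "distinct vs" and set_vs: "set vs = V" and len: "length vs \<ge> 3"
    and step: "\<And>k. Suc k < length vs \<Longrightarrow> E (vs ! k) (vs ! Suc k)"
    and close_last: "E (last vs) (hd vs)"
    using assms(1) unfolding hamiltonian_def by blast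
  have close: "E (vs ! (length vs - 1)) (vs ! 0)"
    using close_last len by (metis hd_conv_nth last_conv_nth list.size(3) not_numeral_le_zero)
  obtain i where i: "i < length vs" "vs ! i = v"
    using assms(2) set_vs by (metis in_set_conv_nth)
  have nth_neq: "vs ! k \<noteq> vs ! l" if "k < length vs" "l < length vs" "k \<noteq> l" for k l
    using distinct that nth_eq_iff_index_eq by blast
  consider "i = 0" | "0 < i" "Suc i < length vs" | "Suc i = length vs"
    using i(1) by linarith
  then show thesis
  proof cases
    case 1
    show thesis
    proof (rule that)
      show "vs ! (length vs - 1) \<noteq> vs ! 1"
        using nth_neq len by simp
      show "E (vs ! (length vs - 1)) v" "E v (vs ! 1)"
        using close step[of 0] i 1 len by auto
    qed
  next
    case 2
    then have i_eq: "Suc (i - 1) = i"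
      by simp
    show thesis
    proof (rule that)
      show "vs ! (i - 1) \<noteq> vs ! Suc i"
        using nth_neq 2 by simp
      show "E (vs ! (i - 1)) v" "E v (vs ! Suc i)"
        using step[of "i - 1"] step[of i] i 2 i_eq by auto
    qed
  next
    case 3
    then have i_eq: "Suc (i - 1) = i" and "i - 1 \<noteq> 0"
      using len by auto
    show thesis
    proof (rule that)
      show "vs ! (i - 1) \<noteq> vs ! 0"
        using \<open>i - 1 \<noteq> 0\<close> i(1) by (intro nth_neq) auto
      show "E (vs ! (i - 1)) v"
        using step[of "i - 1"] i 3 i_eq by auto
      show "E v (vs ! 0)"
        using close i(2) 3 by (metis diff_Suc_1)
    qed
  qed
qed

lemma pg_adj_sym: "pg_adj n u v \<longleftrightarrow> pg_adj n v u"
  unfolding pg_adj_def by blast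

lemma gm_pos: "0 < gm n"
  by (simp add: gm_def)

lemma zero_in_PP: "0 \<in> PP n"
  by (simp add: PP_def gm_pos)

lemma two_power_eq_double_gm: "n \<ge> 1 \<Longrightarrow> 2 ^ n = 2 * gm n"
  unfolding gm_def by (cases n) auto

lemma gm_in_HH: "n \<ge> 1 \<Longrightarrow> gm n \<in> HH n"
  using two_power_eq_double_gm[of n] gm_pos[of n] by (simp add: HH_def)

lemma HH_disjoint_PP: "a \<in> HH n \<Longrightarrow> a \<notin> PP n"
  by (simp add: HH_def PP_def)

lemma gop_PP_closed: "i \<in> PP n \<Longrightarrow> j \<in> PP n \<Longrightarrow> gop n i j \<in> PP n"
  by (simp add: gop_def PP_def gm_pos)

lemma mem_HH_imp_ge_1: "a \<in> HH n \<Longrightarrow> n \<ge> 1"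
  by (cases n) (simp_all add: HH_def gm_def)

lemma gop_zero_left:
  assumes a: "a \<in> GG n"
  shows "gop n 0 a = a"
proof (cases "a \<in> PP n")
  case True
  then show ?thesis
    using zero_in_PP by (simp add: gop_def PP_def)
next
  case False
  then have H: "a \<in> HH n"
    using a by (simp add: GG_def)
  then have "gm n \<le> a" "a < 2 * gm n"
    using two_power_eq_double_gm[OF mem_HH_imp_ge_1[OF H]] by (auto simp: HH_def)
  then have "a mod gm n + gm n = a"
    by (simp add: le_mod_geq)
  then show ?thesis
    using zero_in_PP False H by (simp add: gop_def)
qed

lemma gop_HH_self:
  assumes a: "a \<in> HH n"
  shows "gop n a a = 0"
proof -
  have "((gm n div 2 + 1) * a + (gm n div 2 - 1) * a) mod gm n = 0"
  proof (cases "n - 1")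
    case (Suc k)
    then have m: "gm n = 2 * 2 ^ k" "gm n div 2 = 2 ^ k"
      by (simp_all add: gm_def)
    have "(gm n div 2 + 1) * a + (gm n div 2 - 1) * a = gm n * a"
      unfolding m using one_le_power[of "2::nat" k]
      by (cases "2 ^ k :: nat") (simp_all add: algebra_simps)
    then show ?thesis
      by simp
  qed (simp add: gm_def)
  then show ?thesis
    using HH_disjoint_PP[OF a] by (simp add: gop_def)
qed

lemma gpow_HH: "a \<in> HH n \<Longrightarrow> gpow n a k \<in> {0, a}"
proof (induction n a k rule: gpow.induct)
  case (3 n a k)
  then have "gop n 0 a = a"
    by (intro gop_zero_left) (simp add: GG_def)
  then show ?case
    using 3 gop_HH_self by auto
qed simp_all

lemma gpow_PP_closed: "a \<in> PP n \<Longrightarrow> gpow n a k \<in> PP n"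
  by (induction n a k rule: gpow.induct)
    (simp_all add: gop_PP_closed zero_in_PP)

lemma pg_adj_HH_imp_zero:
  assumes a: "a \<in> HH n" and adj: "pg_adj n a v"
  shows "v = 0"
proof -
  obtain k where pow: "gpow n a k = v \<or> gpow n v k = a" and v: "v \<in> GG n" "v \<noteq> a"
    using adj unfolding pg_adj_def by auto
  have "a \<noteq> 0"
    using a gm_pos[of n] by (simp add: HH_def)
  show ?thesis
  proof (cases "gpow n a k = v")
    case True
    then show ?thesis
      using gpow_HH[OF a, of k] v(2) by auto
  next
    case False
    then have a_pow: "gpow n v k = a"
      using pow by blast
    have "v \<notin> PP n"
      using gpow_PP_closed[of v n k] HH_disjoint_PP[OF a] a_pow by metis
    then have "v \<in> HH n"
      using v(1) by (simp add: GG_def)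
    then have "a \<in> {0, v}"
      using gpow_HH[of v n k] a_pow by simp
    then show ?thesis
      using v(2) \<open>a \<noteq> 0\<close> by blast
  qed
qed

theorem mainTheorem2:
  fixes n :: nat
  assumes "n \<ge> 3"
  shows "\<not> hamiltonian (GG n) (pg_adj n)"
proof
  assume ham: "hamiltonian (GG n) (pg_adj n)"
  have h: "gm n \<in> HH n"
    using assms by (intro gm_in_HH) simp
  then have "gm n \<in> GG n"
    by (simp add: GG_def)
  with ham obtain u w where "u \<noteq> w" "pg_adj n u (gm n)" "pg_adj n (gm n) w"
    by (rule hamiltonian_obtains_neighbours)
  then have "u = 0" "w = 0"
    using pg_adj_HH_imp_zero[OF h] pg_adj_sym by metis+
  with \<open>u \<noteq> w\<close> show False
    by simp
qed

end
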